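(* Let $B,n'\ge1$ be integers, $n=2Bn'$, and $s\ge 0$. Let $f:\{0,1\}^{n'}\to\{\pm\tfrac12\}$ be a balanced function with $I(f)\le s$. Let $W=\mathrm{Span}\{f_z : z\in\{0,1\}^B\}\subseteq\mathcal{N}=\mathbb{C}^{2^n}$, where $f_z$ is defined below. Then $W$ has dimension at least $2^B$ and $W$ is $(\mathcal{E}_{\mathrm{bitflip}},2s)$ immune.
   Context: A function $g:\{0,1\}^m\to\mathbb{C}$ is identified with the vector $\sum_x g(x)|x\rangle\in\mathbb{C}^{2^m}$. For $g:\{0,1\}^m\to\mathbb{C}$ and $i\in[m]$, $I_i(g)=\mathbb{E}_{x\in\{0,1\}^m}|g(x)-g(x\oplus e_i)|^2$ (with $e_i$ the $i$-th unit vector) and $I(g)=\max_i I_i(g)$. Balanced means $f$ takes each of its two values on exactly half the inputs. Partition $[n]$ into $2B$ consecutive blocks of length $n'$; for $x\in\{0,1\}^n$, $i\in[B]$, $b\in\{0,1\}$, let $x_{i,b}\in\{0,1\}^{n'}$ be the restriction of $x$ to the $(2i-1+b)$-th block. For $z\in\{0,1\}^B$ set $f_z(x)=f(x_{1,z_1})\cdots f(x_{B,z_B})$. For $i\in[n]$, $S\subseteq\{0,1\}^{n-1}$, $E_{i,S}$ is the linear operator with $E_{i,S}|x\rangle=|x\oplus e_i\rangle$ if $(x_1,\dots,x_{i-1},x_{i+1},\dots,x_n)\in S$ and $E_{i,S}|x\rangle=|x\rangle$ otherwise; $\mathcal{E}_{\mathrm{bitflip}}=\{E_{i,S}: i\in[n],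 S\subseteq\{0,1\}^{n-1}\}$. A subspace $\mathcal{M}$ is $(\mathcal{E},\varepsilon)$ immune if for every $X\in\mathcal{E}$ and every $\phi\in\mathcal{M}$, $|\phi^*X\phi|\ge(1-\varepsilon)|\phi^*\phi|$. *)

theory Defs
  imports Complex_Main "HOL-Library.Function_Algebras"
begin

text \<open>Bit strings in {0,1}^m are boolean lists of length m (index 0 = first bit).
  Vectors in C^(2^m) are functions from bit strings to complex numbers
  (vanishing outside the cube).\<close>

definition cube :: "nat \<Rightarrow> bool list set" where
  "cube m = {xs. length xs = m}"

definition flip :: "nat \<Rightarrow> bool list \<Rightarrow> bool list" where
  "flip i x = x[i := (\<not> x ! i)]"

definition delete_at :: "nat \<Rightarrow> bool list \<Rightarrow> bool list" where
  "delete_at i x = take i x @ drop (Suc i) x"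

definition infl :: "nat \<Rightarrow> (bool list \<Rightarrow> complex) \<Rightarrow> nat \<Rightarrow> real" where
  "infl m g i = (\<Sum>x\<in>cube m. (cmod (g x - g (flip i x)))^2) / 2 ^ m"

definition max_infl :: "nat \<Rightarrow> (bool list \<Rightarrow> complex) \<Rightarrow> real" where
  "max_infl m g = Max ((\<lambda>i. infl m g i) ` {..<m})"

definition balanced_pm_half :: "nat \<Rightarrow> (bool list \<Rightarrow> complex) \<Rightarrow> bool" where
  "balanced_pm_half m f \<longleftrightarrow>
     (\<forall>x\<in>cube m. f x = 1/2 \<or> f x = -1/2) \<and>
     2 * card {x\<in>cube m. f x = 1/2} = 2 ^ m \<and>
     2 * card {x\<in>cube m. f x = -1/2} = 2 ^ m"

definition blk :: "nat \<Rightarrow> bool list \<Rightarrow> nat \<Rightarrow> bool \<Rightarrow> bool list" where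
  "blk n' x i b = take n' (drop ((2 * i + (if b then 1 else 0)) * n') x)"

definition fz :: "nat \<Rightarrow> nat \<Rightarrow> (bool list \<Rightarrow> complex) \<Rightarrow> bool list \<Rightarrow> bool list \<Rightarrow> complex" where
  "fz B n' f z = (\<lambda>x. if x \<in> cube (2 * B * n') then (\<Prod>i<B. f (blk n' x i (z ! i))) else 0)"

definition cscale :: "complex \<Rightarrow> (bool list \<Rightarrow> complex) \<Rightarrow> (bool list \<Rightarrow> complex)" where
  "cscale c g = (\<lambda>x. c * g x)"

interpretation cvs: vector_space cscale
  by unfold_locales (auto simp: cscale_def algebra_simps fun_eq_iff)

definition ip :: "nat \<Rightarrow> (bool list \<Rightarrow> complex) \<Rightarrow> (bool list \<Rightarrow> complex) \<Rightarrow> complex" where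
  "ip n phi psi = (\<Sum>x\<in>cube n. cnj (phi x) * psi x)"

text \<open>linear operator on C^(2^n) induced by a map of basis states |x> -> |e x>\<close>
definition basis_op :: "nat \<Rightarrow> (bool list \<Rightarrow> bool list) \<Rightarrow> (bool list \<Rightarrow> complex) \<Rightarrow> (bool list \<Rightarrow> complex)" where
  "basis_op n e phi = (\<lambda>y. \<Sum>x\<in>cube n. if e x = y then phi x else 0)"

definition bitflip_map :: "nat \<Rightarrow> bool list set \<Rightarrow> bool list \<Rightarrow> bool list" where
  "bitflip_map i S x = (if delete_at i x \<in> S then flip i x else x)"

definition E_bitflip :: "nat \<Rightarrow> ((bool list \<Rightarrow> complex) \<Rightarrow> (bool list \<Rightarrow> complex)) set" where
  "E_bitflip n = {basis_op n (bitflip_map i S) | i S. i < n \<and> S \<subseteq> cube (n - 1)}"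

definition immune :: "nat \<Rightarrow> ((bool list \<Rightarrow> complex) \<Rightarrow> (bool list \<Rightarrow> complex)) set \<Rightarrow> real
     \<Rightarrow> (bool list \<Rightarrow> complex) set \<Rightarrow> bool" where
  "immune n E eps M \<longleftrightarrow>
     (\<forall>X\<in>E. \<forall>phi\<in>M. cmod (ip n phi (X phi)) \<ge> (1 - eps) * cmod (ip n phi phi))"

end

theory Submission
  imports Defs
begin

(*
  Cut x \<in> {0,1}^n into the 2B blocks of length n'. Each f_z is a tensor product over the
  blocks, with factor f on the blocks (i, z_i) and the constant 1 on the others, so inner
  products and norms of such functions factor blockwise. For z \<noteq> w some block carries f
  in one product and 1 in the other; since f is balanced, \<Sum> f = 0 and the f_z are
  orthogonal, hence independent. Flipping bit i changes a single block, so
  D_i g = g - g \<circ> flip_i turns f_z into the same tensor product with one factor replaced by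
  its derivative: the D_i f_z stay orthogonal (use the other block of a separating pair), and
  as |f| = 1/2, |D_r f|^2 = 2^n' I_r(f) \<le> 4 s |f|^2 gives |D_i f_z|^2 \<le> 4 s |f_z|^2.
  By Pythagoras this bound holds on all of W. Finally, for X = E_{i,S} the vector \<phi> - X\<phi> is
  pointwise either 0 or D_i \<phi>, and |\<phi> - X\<phi>|^2 = 2 |\<phi>|^2 - 2 Re \<phi>*X\<phi>, whence
  |\<phi>*X\<phi>| \<ge> Re \<phi>*X\<phi> \<ge> (1 - 2s) |\<phi>|^2.
*)

lemma finite_cube [simp]: "finite (cube m)"
  using finite_lists_length_eq[of "UNIV :: bool set" m] by (simp add: cube_def)

lemma card_cube: "card (cube m) = 2 ^ m"
  using card_lists_length_eq[of "UNIV :: bool set" m] by (simp add: cube_def)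

lemma flip_in_cube_iff [simp]: "flip i x \<in> cube m \<longleftrightarrow> x \<in> cube m"
  by (simp add: cube_def flip_def)

lemma flip_flip [simp]: "flip i (flip i x) = x"
  by (cases "i < length x") (auto simp: flip_def list_update_beyond)

lemma delete_at_flip [simp]: "delete_at i (flip i x) = delete_at i x"
  by (simp add: delete_at_def flip_def)

section \<open>Norms and bit-flip operators\<close>

definition sqnorm :: "nat \<Rightarrow> (bool list \<Rightarrow> complex) \<Rightarrow> real" where
  "sqnorm m g = (\<Sum>x\<in>cube m. (cmod (g x))\<^sup>2)"

lemma sqnorm_nonneg: "sqnorm m g \<ge> 0"
  unfolding sqnorm_def by (simp add: sum_nonneg)

lemma ip_self: "ip m g g = complex_of_real (sqnorm m g)"
  unfolding ip_def sqnorm_def of_real_sum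
  by (intro sum.cong refl) (metis complex_norm_square mult.commute)

definition diff_flip :: "nat \<Rightarrow> (bool list \<Rightarrow> complex) \<Rightarrow> bool list \<Rightarrow> complex" where
  "diff_flip i g = (\<lambda>x. g x - g (flip i x))"

lemma basis_op_involution:
  assumes "\<And>y. e (e y) = y" "\<And>y. e y \<in> cube n \<longleftrightarrow> y \<in> cube n" "y \<in> cube n"
  shows "basis_op n e \<phi> y = \<phi> (e y)"
proof -
  have "basis_op n e \<phi> y = (\<Sum>x\<in>cube n. if x = e y then \<phi> x else 0)"
    unfolding basis_op_def by (intro sum.cong refl) (metis assms(1))
  then show ?thesis
    using assms(2,3) by simp
qed

lemma cmod_diff_square: "(cmod (a - b))\<^sup>2 = (cmod a)\<^sup>2 + (cmod b)\<^sup>2 - 2 * Re (cnj a * b)"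
  by (simp only: cmod_power2) (simp add: power2_eq_square algebra_simps)

lemma Re_ip_bitflip_lower_bound:
  "2 * sqnorm n \<phi> - sqnorm n (diff_flip i \<phi>) \<le> 2 * Re (ip n \<phi> (basis_op n (bitflip_map i S) \<phi>))"
proof -
  define e where "e = bitflip_map i S"
  have invol: "e (e y) = y" and cube: "e y \<in> cube n \<longleftrightarrow> y \<in> cube n" for y
    by (simp_all add: e_def bitflip_map_def)
  have "(\<Sum>y\<in>cube n. (cmod (\<phi> (e y)))\<^sup>2) = sqnorm n \<phi>"
    unfolding sqnorm_def
    by (rule sum.reindex_bij_betw[of e]) (rule bij_betw_byWitness[of _ e]; auto simp: invol cube)
  then have "(\<Sum>y\<in>cube n. (cmod (\<phi> y - \<phi> (e y)))\<^sup>2)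
      = 2 * sqnorm n \<phi> - 2 * Re (ip n \<phi> (basis_op n e \<phi>))"
    by (simp add: cmod_diff_square sum.distrib sum_subtractf sum_distrib_left sqnorm_def ip_def
        Re_sum basis_op_involution[OF invol cube])
  moreover have "(\<Sum>y\<in>cube n. (cmod (\<phi> y - \<phi> (e y)))\<^sup>2) \<le> sqnorm n (diff_flip i \<phi>)"
    unfolding sqnorm_def diff_flip_def by (intro sum_mono) (simp add: e_def bitflip_map_def)
  ultimately show ?thesis
    by (simp add: e_def)
qed

section \<open>Orthogonal families\<close>

lemma sum_cscale_eq: "(\<Sum>v\<in>V. cscale (c v) v) = (\<lambda>x. \<Sum>v\<in>V. c v * v x)"
  by (induction V rule: infinite_finite_induct) (auto simp: cscale_def)

lemma sqnorm_sum_orthogonal: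
  assumes "finite V" and orth: "\<And>v w. v \<in> V \<Longrightarrow> w \<in> V \<Longrightarrow> v \<noteq> w \<Longrightarrow> ip m (g v) (g w) = 0"
  shows "sqnorm m (\<lambda>x. \<Sum>v\<in>V. c v * g v x) = (\<Sum>v\<in>V. (cmod (c v))\<^sup>2 * sqnorm m (g v))"
proof -
  let ?h = "\<lambda>x. \<Sum>v\<in>V. c v * g v x"
  have "ip m ?h ?h = (\<Sum>x\<in>cube m. \<Sum>v\<in>V. \<Sum>w\<in>V. cnj (c v) * c w * (cnj (g v x) * g w x))"
    unfolding ip_def cnj_sum sum_product by (simp add: mult_ac)
  also have "\<dots> = (\<Sum>v\<in>V. \<Sum>w\<in>V. \<Sum>x\<in>cube m. cnj (c v) * c w * (cnj (g v x) * g w x))"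
    by (subst sum.swap) (intro sum.cong refl sum.swap)
  also have "\<dots> = (\<Sum>v\<in>V. \<Sum>w\<in>V. cnj (c v) * c w * ip m (g v) (g w))"
    by (simp add: ip_def sum_distrib_left)
  also have "\<dots> = (\<Sum>v\<in>V. cnj (c v) * c v * ip m (g v) (g v))"
    using assms(1) by (intro sum.cong refl) (auto simp: sum.remove intro!: sum.neutral, metis orth)
  also have "\<dots> = of_real (\<Sum>v\<in>V. (cmod (c v))\<^sup>2 * sqnorm m (g v))"
    unfolding ip_self of_real_sum
    by (intro sum.cong refl) (metis complex_norm_square mult.commute of_real_mult)
  finally show ?thesis
    unfolding ip_self of_real_eq_iff .
qed

lemma in_span_finiteE:
  assumes "finite V" "\<phi> \<in> cvs.span V"
  obtains c where "\<phi> = (\<lambda>x. \<Sum>v\<in>V. c v * v x)"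
  using assms cvs.span_finite[of V] by (auto simp: sum_cscale_eq)

lemma dim_span_orthogonal:
  assumes "finite V"
    and orth: "\<And>v w. v \<in> V \<Longrightarrow> w \<in> V \<Longrightarrow> v \<noteq> w \<Longrightarrow> ip m v w = 0"
    and pos: "\<And>v. v \<in> V \<Longrightarrow> sqnorm m v > 0"
  shows "cvs.dim (cvs.span V) = card V"
proof (rule cvs.dim_span_eq_card_independent, rule notI)
  assume "cvs.dependent V"
  then obtain c v where v: "v \<in> V" "c v \<noteq> 0" and zero: "(\<lambda>x. \<Sum>v\<in>V. c v * v x) = 0"
    using cvs.dependent_finite[OF assms(1)] by (auto simp: sum_cscale_eq)
  have "(\<Sum>w\<in>V. (cmod (c w))\<^sup>2 * sqnorm m w) = 0"
    using sqnorm_sum_orthogonal[OF assms(1), of m "\<lambda>v. v" c] orth zero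
    by (simp add: sqnorm_def)
  then have "(cmod (c v))\<^sup>2 * sqnorm m v = 0"
    using assms(1) v(1) by (simp add: sum_nonneg_eq_0_iff sqnorm_nonneg)
  then show False
    using v pos[OF v(1)] by simp
qed

lemma sqnorm_diff_flip_span_le:
  assumes "finite V"
    and orth: "\<And>v w. v \<in> V \<Longrightarrow> w \<in> V \<Longrightarrow> v \<noteq> w \<Longrightarrow> ip m v w = 0"
    and orth_diff: "\<And>v w. v \<in> V \<Longrightarrow> w \<in> V \<Longrightarrow> v \<noteq> w \<Longrightarrow>
      ip m (diff_flip i v) (diff_flip i w) = 0"
    and bound: "\<And>v. v \<in> V \<Longrightarrow> sqnorm m (diff_flip i v) \<le> C * sqnorm m v"
    and "\<phi> \<in> cvs.span V"
  shows "sqnorm m (diff_flip i \<phi>) \<le> C * sqnorm m \<phi>"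
proof -
  obtain c where \<phi>: "\<phi> = (\<lambda>x. \<Sum>v\<in>V. c v * v x)"
    using in_span_finiteE[OF assms(1,5)] .
  have "diff_flip i \<phi> = (\<lambda>x. \<Sum>v\<in>V. c v * diff_flip i v x)"
    by (simp add: \<phi> diff_flip_def sum_subtractf right_diff_distrib)
  then have "sqnorm m (diff_flip i \<phi>) = (\<Sum>v\<in>V. (cmod (c v))\<^sup>2 * sqnorm m (diff_flip i v))"
    using sqnorm_sum_orthogonal[OF assms(1) orth_diff] by simp
  also have "\<dots> \<le> (\<Sum>v\<in>V. (cmod (c v))\<^sup>2 * (C * sqnorm m v))"
    by (intro sum_mono mult_left_mono bound) simp_all
  also have "\<dots> = C * sqnorm m \<phi>"
    using sqnorm_sum_orthogonal[OF assms(1), of m "\<lambda>v. v" c] orth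
    by (simp add: \<phi> sum_distrib_left mult_ac)
  finally show ?thesis .
qed

lemma immune_bitflip_span:
  assumes "finite V"
    and orth: "\<And>v w. v \<in> V \<Longrightarrow> w \<in> V \<Longrightarrow> v \<noteq> w \<Longrightarrow> ip n v w = 0"
    and orth_diff: "\<And>i v w. i < n \<Longrightarrow> v \<in> V \<Longrightarrow> w \<in> V \<Longrightarrow> v \<noteq> w \<Longrightarrow>
      ip n (diff_flip i v) (diff_flip i w) = 0"
    and bound: "\<And>i v. i < n \<Longrightarrow> v \<in> V \<Longrightarrow> sqnorm n (diff_flip i v) \<le> 2 * \<epsilon> * sqnorm n v"
  shows "immune n (E_bitflip n) \<epsilon> (cvs.span V)"
  unfolding immune_def
proof (intro ballI)
  fix X \<phi> assume "X \<in> E_bitflip n" "\<phi> \<in> cvs.span V"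
  then obtain i S where X: "X = basis_op n (bitflip_map i S)" and "i < n"
    by (auto simp: E_bitflip_def)
  have "sqnorm n (diff_flip i \<phi>) \<le> 2 * \<epsilon> * sqnorm n \<phi>"
    by (rule sqnorm_diff_flip_span_le[OF assms(1) orth orth_diff[OF \<open>i < n\<close>] bound[OF \<open>i < n\<close>]
          \<open>\<phi> \<in> cvs.span V\<close>])
  then have "(1 - \<epsilon>) * sqnorm n \<phi> \<le> Re (ip n \<phi> (X \<phi>))"
    using Re_ip_bitflip_lower_bound[of n \<phi> i S] X by (simp add: algebra_simps)
  then show "(1 - \<epsilon>) * cmod (ip n \<phi> \<phi>) \<le> cmod (ip n \<phi> (X \<phi>))"
    using complex_Re_le_cmod[of "ip n \<phi> (X \<phi>)"] by (simp add: ip_self sqnorm_nonneg)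
qed

section \<open>Products over blocks\<close>

lemma bij_betw_append_cube: "bij_betw (\<lambda>(u, v). u @ v) (cube a \<times> cube b) (cube (a + b))"
proof (rule bij_betw_imageI)
  show "inj_on (\<lambda>(u, v). u @ v) (cube a \<times> cube b)"
    by (auto simp: inj_on_def cube_def)
  have "x \<in> (\<lambda>(u, v). u @ v) ` (cube a \<times> cube b)" if "x \<in> cube (a + b)" for x
    using that by (intro image_eqI[of _ _ "(take a x, drop a x)"]) (auto simp: cube_def)
  then show "(\<lambda>(u, v). u @ v) ` (cube a \<times> cube b) = cube (a + b)"
    by (auto simp: cube_def)
qed

definition block :: "nat \<Rightarrow> nat \<Rightarrow> bool list \<Rightarrow> bool list" where
  "block n' k x = take n' (drop (k * n') x)"

lemma sum_cube_prod_blocks: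
  fixes g :: "nat \<Rightarrow> bool list \<Rightarrow> 'a :: comm_semiring_1"
  shows "(\<Sum>x\<in>cube (m * n'). \<Prod>k<m. g k (block n' k x)) = (\<Prod>k<m. \<Sum>u\<in>cube n'. g k u)"
proof (induction m arbitrary: g)
  case 0
  then show ?case by (simp add: cube_def)
next
  case (Suc m)
  have "(\<Sum>x\<in>cube (Suc m * n'). \<Prod>k<Suc m. g k (block n' k x))
      = (\<Sum>(u, v)\<in>cube n' \<times> cube (m * n'). \<Prod>k<Suc m. g k (block n' k (u @ v)))"
    unfolding mult_Suc sum.reindex_bij_betw[OF bij_betw_append_cube, symmetric]
    by (simp add: case_prod_unfold)
  also have "\<dots> = (\<Sum>(u, v)\<in>cube n' \<times> cube (m * n'). g 0 u * (\<Prod>k<m. g (Suc k) (block n' k v)))"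
    by (intro sum.cong refl)
      (auto simp del: prod.lessThan_Suc simp: prod.lessThan_Suc_shift block_def cube_def)
  also have "\<dots> = (\<Sum>u\<in>cube n'. g 0 u) * (\<Sum>v\<in>cube (m * n'). \<Prod>k<m. g (Suc k) (block n' k v))"
    by (simp add: sum_product sum.cartesian_product)
  also have "\<dots> = (\<Prod>k<Suc m. \<Sum>u\<in>cube n'. g k u)"
    by (simp del: prod.lessThan_Suc add: Suc.IH[of "\<lambda>k. g (Suc k)"] prod.lessThan_Suc_shift)
  finally show ?case .
qed

lemma block_flip:
  assumes "n' > 0"
  shows "block n' k (flip i x) =
    (if k = i div n' then flip (i mod n') (block n' k x) else block n' k x)"
proof (cases "k = i div n'")
  case True
  have "i - i div n' * n' = i mod n'" "i mod n' < n'"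
    using assms by (simp_all add: minus_div_mult_eq_mod)
  moreover have "drop (i div n' * n') x ! (i mod n') = x ! i" if "i < length x"
    using that div_times_less_eq_dividend[of i n'] by (subst nth_drop) (linarith, simp)
  ultimately show ?thesis
    unfolding True by (cases "i < length x")
      (simp_all add: block_def flip_def drop_update_swap take_update_swap list_update_beyond)
next
  case False
  have "i < k * n' \<or> k * n' + n' \<le> i"
  proof (rule ccontr)
    assume "\<not> ?thesis"
    then have "i div n' = k"
      by (intro div_nat_eqI) (simp_all add: mult.commute)
    with False show False by simp
  qed
  then show ?thesis
    using False by (auto simp: block_def flip_def drop_update_swap)
qed

lemma prod_fun_upd_remove:
  assumes "finite A" "j \<in> A"
  shows "(\<Prod>k\<in>A. (G(j := H)) k (b k)) = H (b j) * (\<Prod>k\<in>A - {j}. G k (b k))"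
  using assms by (simp add: prod.remove)

lemma ip_block_product:
  assumes "\<And>x. x \<in> cube (m * n') \<Longrightarrow> g x = (\<Prod>k<m. G k (block n' k x))"
    and "\<And>x. x \<in> cube (m * n') \<Longrightarrow> h x = (\<Prod>k<m. H k (block n' k x))"
  shows "ip (m * n') g h = (\<Prod>k<m. ip n' (G k) (H k))"
proof -
  have "ip (m * n') g h = (\<Sum>x\<in>cube (m * n'). \<Prod>k<m. cnj (G k (block n' k x)) * H k (block n' k x))"
    unfolding ip_def by (intro sum.cong refl) (simp add: assms prod.distrib cnj_prod)
  then show ?thesis
    by (simp add: sum_cube_prod_blocks[of "\<lambda>k u. cnj (G k u) * H k u"] ip_def)
qed

lemma sqnorm_block_product:
  assumes "\<And>x. x \<in> cube (m * n') \<Longrightarrow> g x = (\<Prod>k<m. G k (block n' k x))"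
  shows "sqnorm (m * n') g = (\<Prod>k<m. sqnorm n' (G k))"
  using ip_block_product[of m n' g G g G, OF assms assms] by (simp add: ip_self flip: of_real_prod)

lemma diff_flip_block_product:
  assumes g: "\<And>x. x \<in> cube (m * n') \<Longrightarrow> g x = (\<Prod>k<m. G k (block n' k x))"
    and "i < m * n'" and x: "x \<in> cube (m * n')"
  shows "diff_flip i g x =
    (\<Prod>k<m. (G(i div n' := diff_flip (i mod n') (G (i div n')))) k (block n' k x))"
proof -
  define j where "j = i div n'"
  have "n' > 0"
    using \<open>i < m * n'\<close> by (cases n') auto
  have j: "j \<in> {..<m}"
    using \<open>i < m * n'\<close> by (simp add: j_def less_mult_imp_div_less)
  let ?R = "\<Prod>k\<in>{..<m} - {j}. G k (block n' k x)"
  have "g x = G j (block n' j x) * ?R"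
    using g[OF x] j by (simp add: prod.remove)
  moreover have "g (flip i x) = G j (flip (i mod n') (block n' j x)) * ?R"
  proof -
    have "g (flip i x) = (\<Prod>k<m. (G(j := \<lambda>u. G j (flip (i mod n') u))) k (block n' k x))"
      using g[of "flip i x"] x \<open>n' > 0\<close> by (simp add: block_flip j_def) (intro prod.cong; simp)
    with j show ?thesis
      by (simp add: prod_fun_upd_remove del: fun_upd_apply)
  qed
  ultimately show ?thesis
    using j unfolding j_def[symmetric]
    by (simp add: prod_fun_upd_remove diff_flip_def algebra_simps del: fun_upd_apply)
qed

section \<open>The tensor products f_z\<close>

(* Block k of x is the block x_{k div 2, odd k}, so f_z applies f to block k iff z_{k div 2} = odd k. *)
definition fz_factor :: "(bool list \<Rightarrow> complex) \<Rightarrow> bool list \<Rightarrow> nat \<Rightarrow> bool list \<Rightarrow> complex" where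
  "fz_factor f z k = (if z ! (k div 2) = odd k then f else (\<lambda>_. 1))"

lemma prod_lessThan_double:
  fixes h :: "nat \<Rightarrow> 'a :: comm_monoid_mult"
  shows "(\<Prod>k<2 * B. h k) = (\<Prod>l<B. h (2 * l) * h (Suc (2 * l)))"
  by (induction B) (simp_all add: mult_ac)

lemma fz_block_product:
  assumes "x \<in> cube (2 * B * n')"
  shows "fz B n' f z x = (\<Prod>k<2 * B. fz_factor f z k (block n' k x))"
  using assms by (simp add: fz_def prod_lessThan_double)
    (intro prod.cong refl; simp add: fz_factor_def blk_def block_def)

lemma balanced_sum_eq_0:
  assumes "balanced_pm_half n' f"
  shows "(\<Sum>u\<in>cube n'. f u) = 0"
proof -
  let ?P = "{u \<in> cube n'. f u = 1/2}" and ?N = "{u \<in> cube n'. f u = -1/2}"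
  have "cube n' = ?P \<union> ?N" "?P \<inter> ?N = {}"
    using assms by (auto simp: balanced_pm_half_def)
  then have "(\<Sum>u\<in>cube n'. f u) = (\<Sum>u\<in>?P. f u) + (\<Sum>u\<in>?N. f u)"
    using sum.union_disjoint[of ?P ?N f] by simp
  also have "\<dots> = (\<Sum>u\<in>?P. 1/2) + (\<Sum>u\<in>?N. -1/2)"
    by (intro arg_cong2[where f = "(+)"] sum.cong) auto
  also have "\<dots> = of_nat (card ?P) / 2 - of_nat (card ?N) / 2"
    by (simp only: sum_constant) simp
  also have "card ?P = card ?N"
    using assms by (simp add: balanced_pm_half_def)
  finally show ?thesis by simp
qed

lemma balanced_sqnorm:
  assumes "balanced_pm_half n' f"
  shows "sqnorm n' f = 2 ^ n' / 4"
proof -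
  have "(cmod (f u))\<^sup>2 = 1/4" if "u \<in> cube n'" for u
  proof -
    have "f u = 1/2 \<or> f u = -1/2"
      using assms that unfolding balanced_pm_half_def by blast
    then have "cmod (f u) = 1/2"
      by (metis norm_minus_cancel minus_divide_left norm_divide norm_numeral norm_one)
    then show ?thesis by (simp only:) (simp add: power2_eq_square)
  qed
  then have "sqnorm n' f = (\<Sum>u\<in>cube n'. 1/4)"
    unfolding sqnorm_def by (rule sum.cong[OF refl])
  then show ?thesis
    by (simp add: card_cube)
qed

lemma ip_fz_factor_eq_0:
  assumes "balanced_pm_half n' f" "z ! (k div 2) \<noteq> w ! (k div 2)"
  shows "ip n' (fz_factor f z k) (fz_factor f w k) = 0"
  using assms(2) balanced_sum_eq_0[OF assms(1)]
  by (auto simp: fz_factor_def ip_def simp flip: cnj_sum)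

lemma sqnorm_fz_factor_pos:
  assumes "balanced_pm_half n' f"
  shows "sqnorm n' (fz_factor f z k) > 0"
proof -
  have "sqnorm n' f > 0"
    by (simp add: balanced_sqnorm[OF assms])
  then show ?thesis
    by (simp add: fz_factor_def sqnorm_def[of _ "\<lambda>_. 1"] card_cube)
qed

lemma sqnorm_diff_flip_fz_factor_le:
  assumes "balanced_pm_half n' f" "max_infl n' f \<le> s" "s \<ge> 0" "r < n'"
  shows "sqnorm n' (diff_flip r (fz_factor f z k)) \<le> 4 * s * sqnorm n' (fz_factor f z k)"
proof (cases "z ! (k div 2) = odd k")
  case True
  have "infl n' f r \<le> max_infl n' f"
    unfolding max_infl_def using \<open>r < n'\<close> by (intro Max_ge) auto
  then have "infl n' f r \<le> s"
    using assms(2) by simp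
  have "sqnorm n' (diff_flip r f) = 2 ^ n' * infl n' f r"
    by (simp add: sqnorm_def diff_flip_def infl_def)
  also have "\<dots> \<le> 2 ^ n' * s"
    using \<open>infl n' f r \<le> s\<close> by simp
  finally show ?thesis
    using True by (simp add: fz_factor_def balanced_sqnorm[OF assms(1)] mult.commute)
next
  case False
  then show ?thesis
    using \<open>s \<ge> 0\<close> by (simp add: fz_factor_def diff_flip_def sqnorm_def)
qed

lemma ip_fz_eq_0:
  assumes "balanced_pm_half n' f" "z \<in> cube B" "w \<in> cube B" "z \<noteq> w"
  shows "ip (2 * B * n') (fz B n' f z) (fz B n' f w) = 0"
proof -
  obtain l where "l < B" "z ! l \<noteq> w ! l"
    using assms(2-4) nth_equalityI[of z w] by (auto simp: cube_def)
  then have "ip n' (fz_factor f z (2 * l)) (fz_factor f w (2 * l)) = 0"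
    using ip_fz_factor_eq_0[OF assms(1)] by simp
  with \<open>l < B\<close> show ?thesis
    by (simp add: ip_block_product[of "2 * B" n' _ "fz_factor f z" _ "fz_factor f w",
          OF fz_block_product fz_block_product] prod_zero_iff)
      (auto intro!: bexI[of _ "2 * l"])
qed

lemma ip_diff_flip_fz_eq_0:
  assumes "balanced_pm_half n' f" "z \<in> cube B" "w \<in> cube B" "z \<noteq> w" "i < 2 * B * n'"
  shows "ip (2 * B * n') (diff_flip i (fz B n' f z)) (diff_flip i (fz B n' f w)) = 0"
proof -
  obtain l where "l < B" "z ! l \<noteq> w ! l"
    using assms(2-4) nth_equalityI[of z w] by (auto simp: cube_def)
  \<comment> \<open>one of the two blocks of pair l is untouched by the flip and separates z from w\<close>
  obtain k where k: "k < 2 * B" "k \<noteq> i div n'" "k div 2 = l"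
  proof (cases "2 * l = i div n'")
    case True
    then show ?thesis using that[of "Suc (2 * l)"] \<open>l < B\<close> by auto
  next
    case False
    then show ?thesis using that[of "2 * l"] \<open>l < B\<close> by auto
  qed
  define G where "G u = (fz_factor f u)(i div n' := diff_flip (i mod n') (fz_factor f u (i div n')))"
    for u
  have product: "\<And>u x. x \<in> cube (2 * B * n') \<Longrightarrow>
      diff_flip i (fz B n' f u) x = (\<Prod>k<2 * B. G u k (block n' k x))"
    unfolding G_def using assms(5) by (intro diff_flip_block_product fz_block_product)
  have "ip (2 * B * n') (diff_flip i (fz B n' f z)) (diff_flip i (fz B n' f w))
      = (\<Prod>k<2 * B. ip n' (G z k) (G w k))"
    by (intro ip_block_product product)
  also have "\<dots> = 0"
    using k ip_fz_factor_eq_0[OF assms(1), of z k w] \<open>z ! l \<noteq> w ! l\<close>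
    by (auto simp: G_def prod_zero_iff)
  finally show ?thesis .
qed

lemma sqnorm_fz_pos:
  assumes "balanced_pm_half n' f"
  shows "sqnorm (2 * B * n') (fz B n' f z) > 0"
  by (simp add: sqnorm_block_product[of "2 * B" n' _ "fz_factor f z", OF fz_block_product]
      sqnorm_fz_factor_pos[OF assms] prod_pos)

lemma sqnorm_diff_flip_fz_le:
  assumes "balanced_pm_half n' f" "max_infl n' f \<le> s" "s \<ge> 0" "i < 2 * B * n'"
  shows "sqnorm (2 * B * n') (diff_flip i (fz B n' f z)) \<le> 4 * s * sqnorm (2 * B * n') (fz B n' f z)"
proof -
  define j where "j = i div n'"
  define F where "F = fz_factor f z"
  have "n' > 0"
    using assms(4) by (cases n') auto
  have j: "j \<in> {..<2 * B}"
    using assms(4) by (simp add: j_def less_mult_imp_div_less)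
  let ?R = "\<Prod>k\<in>{..<2 * B} - {j}. sqnorm n' (F k)"
  have "sqnorm (2 * B * n') (diff_flip i (fz B n' f z))
      = (\<Prod>k<2 * B. sqnorm n' ((F(j := diff_flip (i mod n') (F j))) k))"
    unfolding F_def j_def using assms(4)
    by (intro sqnorm_block_product diff_flip_block_product fz_block_product)
  also have "\<dots> = sqnorm n' (diff_flip (i mod n') (F j)) * ?R"
    using j by (simp add: prod.remove)
  also have "\<dots> \<le> 4 * s * sqnorm n' (F j) * ?R"
    unfolding F_def using \<open>n' > 0\<close>
    by (intro mult_right_mono sqnorm_diff_flip_fz_factor_le assms(1-3) prod_nonneg sqnorm_nonneg)
      simp_all
  also have "\<dots> = 4 * s * sqnorm (2 * B * n') (fz B n' f z)"
    unfolding F_def using j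
    by (simp add: sqnorm_block_product[of "2 * B" n' _ "fz_factor f z", OF fz_block_product]
        prod.remove)
  finally show ?thesis .
qed

lemma inj_on_fz:
  assumes "balanced_pm_half n' f"
  shows "inj_on (fz B n' f) (cube B)"
proof (rule inj_onI, rule ccontr)
  fix z w assume "z \<in> cube B" "w \<in> cube B" "fz B n' f z = fz B n' f w" "z \<noteq> w"
  then have "ip (2 * B * n') (fz B n' f z) (fz B n' f z) = 0"
    using ip_fz_eq_0[OF assms] by metis
  then show False
    using sqnorm_fz_pos[OF assms, of B z] by (simp add: ip_self)
qed

theorem theorem2:
  fixes B n' n :: nat and s :: real and f :: "bool list \<Rightarrow> complex"
  assumes "B \<ge> 1" and "n' \<ge> 1" and "n = 2 * B * n'" and "s \<ge> 0"
    and "balanced_pm_half n' f"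
    and "max_infl n' f \<le> s"
  defines "W \<equiv> cvs.span (fz B n' f ` cube B)"
  shows "cvs.dim W \<ge> 2 ^ B \<and> immune n (E_bitflip n) (2 * s) W"
proof -
  let ?V = "fz B n' f ` cube B"
  have orth: "ip n v w = 0" if "v \<in> ?V" "w \<in> ?V" "v \<noteq> w" for v w
    using that ip_fz_eq_0[OF assms(5)] unfolding assms(3) by auto
  have "cvs.dim W = card ?V"
    unfolding W_def
    by (rule dim_span_orthogonal[OF _ orth]) (use sqnorm_fz_pos[OF assms(5)] assms(3) in auto)
  also have "\<dots> = 2 ^ B"
    by (simp add: card_image[OF inj_on_fz[OF assms(5)]] card_cube)
  moreover have "immune n (E_bitflip n) (2 * s) W"
    unfolding W_def
  proof (rule immune_bitflip_span[OF _ orth])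
    show "ip n (diff_flip i v) (diff_flip i w) = 0"
      if "i < n" "v \<in> ?V" "w \<in> ?V" "v \<noteq> w" for i v w
      using that ip_diff_flip_fz_eq_0[OF assms(5)] unfolding assms(3) by auto
    show "sqnorm n (diff_flip i v) \<le> 2 * (2 * s) * sqnorm n v" if "i < n" "v \<in> ?V" for i v
      using that sqnorm_diff_flip_fz_le[OF assms(5,6,4)] unfolding assms(3) by auto
  qed simp
  ultimately show ?thesis
    by simp
qed

end
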